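(* Let $a,b>0$, $c=a+b$, and $F(x)=F(a,b;c;x)$ for $|x|<1$. Then (1) $\log F(x)$ is convex on $(0,1)$; (2) $t\mapsto\log F(1-e^{-t})$ is concave on $(0,\infty)$; (3) $t\mapsto F(1-e^{-t})$ is convex on $(0,\infty)$. In particular, $$F\Big(\frac{x+y}{2}\Big)\le\sqrt{F(x)F(y)}\le F\big(1-\sqrt{(1-x)(1-y)}\big)\le\frac{F(x)+F(y)}{2}$$ for all $x,y\in(0,1)$, with equality if and only if $x=y$.
   Context: $F(a,b;c;x)=\sum_{n=0}^\infty\frac{(a,n)(b,n)}{(c,n)\,n!}x^n$ for $|x|<1$ is the Gaussian hypergeometric function, where $(a,0)=1$ and $(a,n)=a(a+1)\cdots(a+n-1)$ for $n\ge1$. *)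

theory Defs
  imports "HOL-Analysis.Analysis"
begin

definition hypergeom :: "real \<Rightarrow> real \<Rightarrow> real \<Rightarrow> real \<Rightarrow> real" where
  "hypergeom a b c x =
     (\<Sum>n. pochhammer a n * pochhammer b n / (pochhammer c n * fact n) * x ^ n)"

end

theory Submission
  imports Defs "HOL-Real_Asymp.Real_Asymp"
begin

text \<open>Write F(x) = sum of A_n x^n. The derivative F' has coefficients
  A_n (a+n)(b+n)/(a+b+n) = A_n (n + ab/(a+b+n)), and for x = 1 - e^-t one has dx/dt = 1 - x,
  where (1-x)F'(x) has coefficients A_n ab/(a+b+n). So the derivatives of the three functions are
  F'/F, (1-x)F'(x)/F(x) and (1-x)F'(x), read as functions of x. A quotient of power series with
  positive coefficients is strictly increasing (decreasing) in x when the ratio of the coefficients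
  is, as the cross difference of the partial sums is a sum of terms of one sign; hence all three
  derivatives are strictly monotone. The inequalities are the resulting strict midpoint
  inequalities: at x, y for ln F, and at s = -ln(1-x), t = -ln(1-y) for the other two functions,
  since 1 - e^-((s+t)/2) = 1 - sqrt((1-x)(1-y)).\<close>

lemma sum_cross_difference:
  fixes p q :: "nat \<Rightarrow> 'a::comm_ring_1"
  shows "(\<Sum>n<N. p n * x^n) * (\<Sum>n<N. q n * y^n) - (\<Sum>n<N. p n * y^n) * (\<Sum>n<N. q n * x^n)
       = (\<Sum>m<N. \<Sum>n<m. (p n * q m - p m * q n) * (x^n * y^m - y^n * x^m))"
proof (induction N)
  case 0
  then show ?case by simp
next
  case (Suc N)
  have "(\<Sum>n<N. (p n * q N - p N * q n) * (x^n * y^N - y^n * x^N))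
      = q N * y^N * (\<Sum>n<N. p n * x^n) - q N * x^N * (\<Sum>n<N. p n * y^n)
        - p N * y^N * (\<Sum>n<N. q n * x^n) + p N * x^N * (\<Sum>n<N. q n * y^n)"
    by (simp add: sum_distrib_left sum_subtractf sum.distrib algebra_simps)
  with Suc.IH show ?case by (simp add: algebra_simps)
qed

lemma powser_cross_difference_le:
  fixes p q :: "nat \<Rightarrow> real"
  assumes summable: "summable (\<lambda>n. p n * x^n)" "summable (\<lambda>n. p n * y^n)"
      "summable (\<lambda>n. q n * x^n)" "summable (\<lambda>n. q n * y^n)"
    and "0 \<le> x" "x \<le> y"
    and cross: "\<And>n m. n < m \<Longrightarrow> p n * q m \<le> p m * q n"
  shows "(\<Sum>n. p n * x^n) * (\<Sum>n. q n * y^n) - (\<Sum>n. p n * y^n) * (\<Sum>n. q n * x^n)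
          \<le> (p 0 * q 1 - p 1 * q 0) * (y - x)"
proof -
  define t where "t n m = (p n * q m - p m * q n) * (x^n * y^m - y^n * x^m)" for n m
  have t_nonpos: "t n m \<le> 0" if "n < m" for n m
  proof -
    have "x^n * y^n * x^(m - n) \<le> x^n * y^n * y^(m - n)"
      using \<open>0 \<le> x\<close> \<open>x \<le> y\<close> by (intro mult_left_mono power_mono) auto
    moreover have "x^m = x^n * x^(m - n)" "y^m = y^n * y^(m - n)"
      using that by (simp_all flip: power_add)
    ultimately have "0 \<le> x^n * y^m - y^n * x^m"
      by (simp add: algebra_simps)
    then show ?thesis
      unfolding t_def using cross[OF that] by (simp add: mult_nonpos_nonneg)
  qed
  have partial_le: "(\<Sum>m<N. \<Sum>n<m. t n m) \<le> t 0 1" if "2 \<le> N" for N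
  proof -
    have "(\<Sum>m<N. \<Sum>n<m. t n m) = t 0 1 + (\<Sum>m\<in>{..<N}-{1}. \<Sum>n<m. t n m)"
      using that by (simp add: sum.remove[of "{..<N}" 1])
    also have "\<dots> \<le> t 0 1"
      using t_nonpos by (auto intro!: sum_nonpos)
    finally show ?thesis .
  qed
  have "(\<lambda>N. (\<Sum>n<N. p n * x^n) * (\<Sum>n<N. q n * y^n) - (\<Sum>n<N. p n * y^n) * (\<Sum>n<N. q n * x^n))
      \<longlonglongrightarrow> (\<Sum>n. p n * x^n) * (\<Sum>n. q n * y^n) - (\<Sum>n. p n * y^n) * (\<Sum>n. q n * x^n)"
    by (intro tendsto_intros summable_LIMSEQ summable)
  then show ?thesis
    by (rule LIMSEQ_le_const2)
       (use partial_le in \<open>auto simp: sum_cross_difference t_def\<close>)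
qed

lemma powser_pos:
  fixes q :: "nat \<Rightarrow> real"
  assumes "\<And>n. 0 \<le> q n" "0 < q 0" "summable (\<lambda>n. q n * x^n)" "0 \<le> x"
  shows "0 < (\<Sum>n. q n * x^n)"
  by (rule suminf_pos2[where i=0]) (use assms in auto)

lemma powser_quotient_strict_mono:
  fixes p q :: "nat \<Rightarrow> real"
  assumes q_pos: "\<And>n. 0 < q n"
    and summable: "summable (\<lambda>n. p n * y^n)" "summable (\<lambda>n. q n * y^n)"
    and "0 \<le> x" "x < y"
    and mono: "mono (\<lambda>n. p n / q n)" and strict: "p 0 / q 0 < p 1 / q 1"
  shows "(\<Sum>n. p n * x^n) / (\<Sum>n. q n * x^n) < (\<Sum>n. p n * y^n) / (\<Sum>n. q n * y^n)"
proof -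
  have summable_x: "summable (\<lambda>n. p n * x^n)" "summable (\<lambda>n. q n * x^n)"
    using summable \<open>0 \<le> x\<close> \<open>x < y\<close> by (auto intro: powser_inside)
  have cross: "p n * q m \<le> p m * q n" if "n < m" for n m
    using monoD[OF mono, of n m] that q_pos[of n] q_pos[of m] by (simp add: divide_simps)
  have "p 0 * q 1 < p 1 * q 0"
    using strict q_pos[of 0] q_pos[of 1] by (simp add: divide_simps)
  then have "(p 0 * q 1 - p 1 * q 0) * (y - x) < 0"
    using \<open>x < y\<close> by (simp add: mult_neg_pos)
  then have "(\<Sum>n. p n * x^n) * (\<Sum>n. q n * y^n) - (\<Sum>n. p n * y^n) * (\<Sum>n. q n * x^n) < 0"
    using powser_cross_difference_le[OF summable_x(1) summable(1) summable_x(2) summable(2)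
        \<open>0 \<le> x\<close> _ cross] \<open>x < y\<close> by linarith
  moreover have "0 < (\<Sum>n. q n * x^n)" "0 < (\<Sum>n. q n * y^n)"
    using q_pos summable summable_x \<open>0 \<le> x\<close> \<open>x < y\<close> by (auto intro!: powser_pos less_imp_le)
  ultimately show ?thesis by (simp add: divide_simps)
qed

lemma powser_quotient_strict_antimono:
  fixes p q :: "nat \<Rightarrow> real"
  assumes q_pos: "\<And>n. 0 < q n"
    and summable: "summable (\<lambda>n. p n * y^n)" "summable (\<lambda>n. q n * y^n)"
    and "0 \<le> x" "x < y"
    and antimono: "antimono (\<lambda>n. p n / q n)" and strict: "p 1 / q 1 < p 0 / q 0"
  shows "(\<Sum>n. p n * y^n) / (\<Sum>n. q n * y^n) < (\<Sum>n. p n * x^n) / (\<Sum>n. q n * x^n)"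
proof -
  have "mono (\<lambda>n. - p n / q n)"
    using antimono by (auto simp: mono_def antimono_def)
  moreover have "summable (\<lambda>n. - p n * z^n)" if "summable (\<lambda>n. p n * z^n)" for z
    using summable_minus[OF that] by simp
  ultimately have "(\<Sum>n. - p n * x^n) / (\<Sum>n. q n * x^n) < (\<Sum>n. - p n * y^n) / (\<Sum>n. q n * y^n)"
    using strict by (intro powser_quotient_strict_mono[OF q_pos _ summable(2) \<open>0 \<le> x\<close> \<open>x < y\<close>])
      (auto simp: summable)
  moreover have "summable (\<lambda>n. p n * x^n)"
    using summable \<open>0 \<le> x\<close> \<open>x < y\<close> by (auto intro: powser_inside)
  ultimately show ?thesis
    using summable by (simp add: suminf_minus)
qed

lemma powser_strict_mono:
  fixes p :: "nat \<Rightarrow> real"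
  assumes nonneg: "\<And>n. 0 \<le> p n" and "0 < k" "0 < p k"
    and summable: "summable (\<lambda>n. p n * y^n)" and "0 \<le> x" "x < y"
  shows "(\<Sum>n. p n * x^n) < (\<Sum>n. p n * y^n)"
proof -
  have summable_x: "summable (\<lambda>n. p n * x^n)"
    using summable \<open>0 \<le> x\<close> \<open>x < y\<close> by (auto intro: powser_inside)
  have "x^n \<le> y^n" for n
    using \<open>0 \<le> x\<close> \<open>x < y\<close> by (intro power_mono) auto
  moreover have "x^k < y^k"
    using \<open>0 \<le> x\<close> \<open>x < y\<close> \<open>0 < k\<close> by (intro power_strict_mono) auto
  ultimately have "0 < (\<Sum>n. p n * y^n - p n * x^n)"
    using nonneg \<open>0 < p k\<close>
    by (intro suminf_pos2[where i=k] summable_diff summable summable_x)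
       (auto simp: mult_left_mono simp flip: right_diff_distrib)
  then show ?thesis
    using suminf_diff[OF summable summable_x] by simp
qed

lemma sums_one_minus_mult_diffs:
  fixes f :: "nat \<Rightarrow> 'a::{real_normed_field,banach}"
  assumes "summable (\<lambda>n. diffs f n * x^n)"
  shows "(\<lambda>n. (diffs f n - of_nat n * f n) * x^n) sums ((1 - x) * (\<Sum>n. diffs f n * x^n))"
proof -
  have "x * (of_nat n * f n * x^(n - Suc 0)) = of_nat n * f n * x^n" for n
    by (cases n) (simp_all add: algebra_simps)
  then have "(\<lambda>n. of_nat n * f n * x^n) sums (x * (\<Sum>n. diffs f n * x^n))"
    using sums_mult[OF diffs_equiv[OF assms], of x] by (simp only:)
  from sums_diff[OF summable_sums[OF assms] this] show ?thesis
    by (simp add: algebra_simps)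
qed

lemma midpoint_less_of_deriv_strict_mono:
  fixes f f' :: "real \<Rightarrow> real"
  assumes "connected A"
    and deriv: "\<And>x. x \<in> A \<Longrightarrow> (f has_real_derivative f' x) (at x)"
    and mono: "\<And>x y. x \<in> A \<Longrightarrow> y \<in> A \<Longrightarrow> x < y \<Longrightarrow> f' x < f' y"
    and "x \<in> A" "y \<in> A" "x \<noteq> y"
  shows "f ((x + y) / 2) < (f x + f y) / 2"
proof -
  have less: "f ((u + v) / 2) < (f u + f v) / 2" if "u \<in> A" "v \<in> A" "u < v" for u v
  proof -
    define m where "m = (u + v) / 2"
    have "u < m" "m < v" using \<open>u < v\<close> by (auto simp: m_def)
    have in_A: "z \<in> A" if "u \<le> z" "z \<le> v" for z
      using connectedD_interval[OF \<open>connected A\<close> \<open>u \<in> A\<close> \<open>v \<in> A\<close> that] .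
    obtain z1 where z1: "u < z1" "z1 < m" "f m - f u = (m - u) * f' z1"
      using MVT2[OF \<open>u < m\<close>, of f f'] deriv in_A \<open>m < v\<close> by force
    obtain z2 where z2: "m < z2" "z2 < v" "f v - f m = (v - m) * f' z2"
      using MVT2[OF \<open>m < v\<close>, of f f'] deriv in_A \<open>u < m\<close> by force
    have "f' z1 < f' z2"
      using mono in_A z1 z2 \<open>u < m\<close> \<open>m < v\<close> by simp
    moreover have "m - u = v - m" "0 < m - u" using \<open>u < m\<close> by (auto simp: m_def field_simps)
    ultimately have "f m - f u < f v - f m"
      using z1 z2 by (metis mult_strict_left_mono)
    then show ?thesis by (simp add: m_def)
  qed
  show ?thesis
    using less[of x y] less[of y x] assms by (cases "x < y") (auto simp: add.commute)
qed

lemma exp_neg_midpoint_neg_ln: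
  assumes "x < 1" "y < 1"
  shows "exp (- ((- ln (1 - x) + - ln (1 - y)) / 2)) = sqrt ((1 - x) * (1 - y))"
proof -
  have "- ((- ln (1 - x) + - ln (1 - y)) / 2) = (ln (1 - x) + ln (1 - y)) / 2"
    by (simp add: field_simps)
  also have "\<dots> = ln (sqrt ((1 - x) * (1 - y)))"
    using assms by (simp add: ln_sqrt ln_mult)
  finally show ?thesis
    using assms by simp
qed

definition hyp_coeff :: "real \<Rightarrow> real \<Rightarrow> real \<Rightarrow> nat \<Rightarrow> real" where
  "hyp_coeff a b c n = pochhammer a n * pochhammer b n / (pochhammer c n * fact n)"

definition hypergeom_deriv :: "real \<Rightarrow> real \<Rightarrow> real \<Rightarrow> real \<Rightarrow> real" where
  "hypergeom_deriv a b c x = (\<Sum>n. diffs (hyp_coeff a b c) n * x^n)"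

lemma hypergeom_eq_powser: "hypergeom a b c x = (\<Sum>n. hyp_coeff a b c n * x^n)"
  by (simp add: hypergeom_def hyp_coeff_def)

lemma hyp_coeff_0 [simp]: "hyp_coeff a b c 0 = 1"
  by (simp add: hyp_coeff_def)

lemma hyp_coeff_pos: "0 < a \<Longrightarrow> 0 < b \<Longrightarrow> 0 < c \<Longrightarrow> 0 < hyp_coeff a b c n"
  unfolding hyp_coeff_def by (intro divide_pos_pos mult_pos_pos pochhammer_pos) auto

lemma hyp_coeff_Suc:
  assumes "0 < c"
  shows "hyp_coeff a b c (Suc n) = hyp_coeff a b c n * ((a + n) * (b + n) / ((c + n) * (real n + 1)))"
proof -
  have "pochhammer c n > 0" "c + n > 0"
    using assms by (auto intro: pochhammer_pos)
  then show ?thesis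
    unfolding hyp_coeff_def pochhammer_Suc fact_Suc by (simp add: field_simps)
qed

lemma diffs_hyp_coeff:
  assumes "0 < c"
  shows "diffs (hyp_coeff a b c) n = hyp_coeff a b c n * ((a + n) * (b + n) / (c + n))"
proof -
  have "(real n + 1) * ((a + n) * (b + n) / ((c + n) * (real n + 1))) = (a + n) * (b + n) / (c + n)"
    by simp
  then show ?thesis
    unfolding diffs_def hyp_coeff_Suc[OF assms] by (simp add: ac_simps)
qed

lemma conv_radius_hyp_coeff:
  assumes "0 < a" "0 < b" "0 < c"
  shows "conv_radius (hyp_coeff a b c) = 1"
proof (rule conv_radius_ratio_limit_nonzero[of _ 1])
  have "norm (hyp_coeff a b c n) / norm (hyp_coeff a b c (Suc n))
      = (c + n) * (real n + 1) / ((a + n) * (b + n))" for n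
    using hyp_coeff_pos[OF assms, of n] assms
    unfolding hyp_coeff_Suc[OF assms(3)] by (simp add: abs_mult ac_simps)
  moreover have "(\<lambda>n. (c + n) * (real n + 1) / ((a + n) * (b + n))) \<longlonglongrightarrow> 1"
    by real_asymp
  ultimately show "(\<lambda>n. norm (hyp_coeff a b c n) / norm (hyp_coeff a b c (Suc n))) \<longlonglongrightarrow> 1"
    by (simp only:)
qed simp_all

lemma summable_hyp_coeff:
  "0 < a \<Longrightarrow> 0 < b \<Longrightarrow> 0 < c \<Longrightarrow> \<bar>x\<bar> < 1 \<Longrightarrow> summable (\<lambda>n. hyp_coeff a b c n * x^n)"
  by (rule summable_in_conv_radius) (simp add: conv_radius_hyp_coeff)

lemma summable_diffs_hyp_coeff:
  "0 < a \<Longrightarrow> 0 < b \<Longrightarrow> 0 < c \<Longrightarrow> \<bar>x\<bar> < 1 \<Longrightarrow> summable (\<lambda>n. diffs (hyp_coeff a b c) n * x^n)"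
  by (rule termdiff_converges[of x 1]) (simp_all add: summable_hyp_coeff)

lemma hypergeom_pos:
  assumes "0 < a" "0 < b" "0 < c" "0 \<le> x" "x < 1"
  shows "0 < hypergeom a b c x"
  unfolding hypergeom_eq_powser
  using assms by (intro powser_pos summable_hyp_coeff less_imp_le[OF hyp_coeff_pos]) auto

lemma hypergeom_has_real_derivative:
  assumes "0 < a" "0 < b" "0 < c" "\<bar>x\<bar> < 1"
  shows "(hypergeom a b c has_real_derivative hypergeom_deriv a b c x) (at x)"
proof -
  have "hypergeom a b c = (\<lambda>x. \<Sum>n. hyp_coeff a b c n * x^n)"
    by (simp add: fun_eq_iff hypergeom_eq_powser)
  then show ?thesis
    unfolding hypergeom_deriv_def
    using assms by (simp add: has_field_derivative_powser conv_radius_hyp_coeff)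
qed

lemma ln_hypergeom_has_real_derivative:
  assumes "0 < a" "0 < b" "0 < c" "0 \<le> x" "x < 1"
  shows "((\<lambda>x. ln (hypergeom a b c x)) has_real_derivative
           hypergeom_deriv a b c x / hypergeom a b c x) (at x)"
  using DERIV_chain2[OF DERIV_ln_divide hypergeom_has_real_derivative] assms
  by (simp add: hypergeom_pos)

lemma hypergeom_exp_has_real_derivative:
  assumes "0 < a" "0 < b" "0 < c" "0 < t"
  shows "((\<lambda>t. hypergeom a b c (1 - exp (- t))) has_real_derivative
           exp (- t) * hypergeom_deriv a b c (1 - exp (- t))) (at t)"
proof -
  have "\<bar>1 - exp (- t)\<bar> < 1"
    using \<open>0 < t\<close> by auto
  moreover have "((\<lambda>t. 1 - exp (- t)) has_real_derivative exp (- t)) (at t)"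
    by (auto intro!: derivative_eq_intros)
  ultimately show ?thesis
    using DERIV_chain2[OF hypergeom_has_real_derivative[OF assms(1-3)]] by (simp add: mult.commute)
qed

lemma ln_hypergeom_exp_has_real_derivative:
  assumes "0 < a" "0 < b" "0 < c" "0 < t"
  shows "((\<lambda>t. ln (hypergeom a b c (1 - exp (- t)))) has_real_derivative
           exp (- t) * hypergeom_deriv a b c (1 - exp (- t)) / hypergeom a b c (1 - exp (- t))) (at t)"
  using DERIV_chain2[OF DERIV_ln_divide hypergeom_exp_has_real_derivative[OF assms]] assms
  by (simp add: hypergeom_pos)

context
  fixes a b :: real
  assumes a_pos: "0 < a" and b_pos: "0 < b"
begin

lemma hyp_coeff_deriv_ratio:
  "diffs (hyp_coeff a b (a + b)) n / hyp_coeff a b (a + b) n = n + a * b / (a + b + n)"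
proof -
  have "0 < a + b + n" "0 < hyp_coeff a b (a + b) n"
    using a_pos b_pos by (auto intro: hyp_coeff_pos)
  moreover from this(1) have "(a + n) * (b + n) / (a + b + n) = n + a * b / (a + b + n)"
    by (simp add: field_simps)
  ultimately show ?thesis
    using a_pos b_pos by (simp add: diffs_hyp_coeff)
qed

lemma strict_mono_hyp_coeff_deriv_ratio: "strict_mono (\<lambda>n. real n + a * b / (a + b + n))"
proof (rule strict_mono_Suc_iff[THEN iffD2], intro allI)
  fix n :: nat
  have "a * b < (a + b) * (a + b)"
    using mult_pos_pos[OF a_pos a_pos] mult_pos_pos[OF a_pos b_pos] mult_pos_pos[OF b_pos b_pos]
    by (simp add: algebra_simps)
  also have "\<dots> \<le> (a + b + n) * (a + b + n + 1)"
    by (intro mult_mono) (use a_pos b_pos in auto)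
  finally have less: "a * b < (a + b + n) * (a + b + n + 1)" .
  have "0 < a + b + n"
    using a_pos b_pos by simp
  then have "a * b / (a + b + n) - a * b / (a + b + n + 1) = a * b / ((a + b + n) * (a + b + n + 1))"
    by (simp add: field_simps)
  also have "\<dots> < 1"
    using less \<open>0 < a + b + n\<close> by simp
  finally have "a * b / (a + b + n) - a * b / (a + b + n + 1) < 1" .
  then show "real n + a * b / (a + b + n) < real (Suc n) + a * b / (a + b + real (Suc n))"
    by (simp add: ac_simps)
qed

lemma sums_one_minus_mult_hypergeom_deriv:
  assumes "\<bar>x\<bar> < 1"
  shows "(\<lambda>n. hyp_coeff a b (a + b) n * (a * b / (a + b + n)) * x^n)
           sums ((1 - x) * hypergeom_deriv a b (a + b) x)"
proof -
  have coeff: "(diffs (hyp_coeff a b (a + b)) n - real n * hyp_coeff a b (a + b) n) * x^n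
      = hyp_coeff a b (a + b) n * (a * b / (a + b + n)) * x^n" for n
    using hyp_coeff_deriv_ratio[of n] hyp_coeff_pos[OF a_pos b_pos, of "a + b" n] a_pos b_pos
    by (simp add: field_simps)
  have "summable (\<lambda>n. diffs (hyp_coeff a b (a + b)) n * x^n)"
    using a_pos b_pos assms by (intro summable_diffs_hyp_coeff) auto
  from sums_one_minus_mult_diffs[OF this] show ?thesis
    unfolding hypergeom_deriv_def coeff .
qed

lemma hypergeom_deriv_quotient_strict_mono:
  assumes "0 \<le> x" "x < y" "y < 1"
  shows "hypergeom_deriv a b (a + b) x / hypergeom a b (a + b) x
       < hypergeom_deriv a b (a + b) y / hypergeom a b (a + b) y"
  unfolding hypergeom_deriv_def hypergeom_eq_powser
proof (rule powser_quotient_strict_mono)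
  show "mono (\<lambda>n. diffs (hyp_coeff a b (a + b)) n / hyp_coeff a b (a + b) n)"
    using strict_mono_mono[OF strict_mono_hyp_coeff_deriv_ratio] by (simp add: hyp_coeff_deriv_ratio)
  show "diffs (hyp_coeff a b (a + b)) 0 / hyp_coeff a b (a + b) 0
      < diffs (hyp_coeff a b (a + b)) 1 / hyp_coeff a b (a + b) 1"
    using strict_monoD[OF strict_mono_hyp_coeff_deriv_ratio, of 0 1]
    by (simp only: hyp_coeff_deriv_ratio)
qed (use assms a_pos b_pos in \<open>auto intro: hyp_coeff_pos summable_hyp_coeff summable_diffs_hyp_coeff\<close>)

lemma one_minus_mult_hypergeom_deriv_eq:
  "\<bar>x\<bar> < 1 \<Longrightarrow> (1 - x) * hypergeom_deriv a b (a + b) x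
     = (\<Sum>n. hyp_coeff a b (a + b) n * (a * b / (a + b + n)) * x^n)"
  using sums_one_minus_mult_hypergeom_deriv by (simp add: sums_iff)

lemma summable_one_minus_mult_hypergeom_deriv:
  "\<bar>x\<bar> < 1 \<Longrightarrow> summable (\<lambda>n. hyp_coeff a b (a + b) n * (a * b / (a + b + n)) * x^n)"
  using sums_one_minus_mult_hypergeom_deriv by (simp add: sums_iff)

lemma one_minus_mult_hypergeom_deriv_quotient_strict_antimono:
  assumes "0 \<le> x" "x < y" "y < 1"
  shows "(1 - y) * hypergeom_deriv a b (a + b) y / hypergeom a b (a + b) y
       < (1 - x) * hypergeom_deriv a b (a + b) x / hypergeom a b (a + b) x"
proof -
  define e where "e n = hyp_coeff a b (a + b) n * (a * b / (a + b + n))" for n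
  have e_ratio: "e n / hyp_coeff a b (a + b) n = a * b / (a + b + n)" for n
    using hyp_coeff_pos[OF a_pos b_pos, of "a + b" n] a_pos b_pos by (simp add: e_def)
  have "(\<Sum>n. e n * y^n) / (\<Sum>n. hyp_coeff a b (a + b) n * y^n)
      < (\<Sum>n. e n * x^n) / (\<Sum>n. hyp_coeff a b (a + b) n * x^n)"
  proof (rule powser_quotient_strict_antimono)
    show "antimono (\<lambda>n. e n / hyp_coeff a b (a + b) n)"
      unfolding e_ratio by (intro antimonoI divide_left_mono) (use a_pos b_pos in auto)
    show "e 1 / hyp_coeff a b (a + b) 1 < e 0 / hyp_coeff a b (a + b) 0"
      unfolding e_ratio using a_pos b_pos by (auto intro!: divide_strict_left_mono mult_pos_pos)
  qed (use assms a_pos b_pos in \<open>auto intro: hyp_coeff_pos summable_hyp_coeff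
        summable_one_minus_mult_hypergeom_deriv[folded e_def]\<close>)
  moreover have "\<bar>x\<bar> < 1" "\<bar>y\<bar> < 1"
    using assms by auto
  ultimately show ?thesis
    by (simp add: one_minus_mult_hypergeom_deriv_eq[folded e_def] hypergeom_eq_powser)
qed

lemma one_minus_mult_hypergeom_deriv_strict_mono:
  assumes "0 \<le> x" "x < y" "y < 1"
  shows "(1 - x) * hypergeom_deriv a b (a + b) x < (1 - y) * hypergeom_deriv a b (a + b) y"
proof -
  define e where "e n = hyp_coeff a b (a + b) n * (a * b / (a + b + n))" for n
  have e_pos: "0 < e n" for n
    using a_pos b_pos by (simp add: e_def hyp_coeff_pos)
  have "summable (\<lambda>n. e n * y^n)"
    using assms by (intro summable_one_minus_mult_hypergeom_deriv[folded e_def]) auto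
  then have "(\<Sum>n. e n * x^n) < (\<Sum>n. e n * y^n)"
    using assms by (intro powser_strict_mono[where k = 1] less_imp_le[OF e_pos] e_pos) auto
  moreover have "\<bar>x\<bar> < 1" "\<bar>y\<bar> < 1"
    using assms by auto
  ultimately show ?thesis
    by (simp add: one_minus_mult_hypergeom_deriv_eq[folded e_def])
qed

lemma hypergeom_exp_deriv_strict_mono:
  assumes "0 < s" "s < t"
  shows "exp (- s) * hypergeom_deriv a b (a + b) (1 - exp (- s))
       < exp (- t) * hypergeom_deriv a b (a + b) (1 - exp (- t))"
  using one_minus_mult_hypergeom_deriv_strict_mono[of "1 - exp (- s)" "1 - exp (- t)"] assms
  by simp

lemma ln_hypergeom_exp_deriv_strict_antimono:
  assumes "0 < s" "s < t"
  shows "exp (- t) * hypergeom_deriv a b (a + b) (1 - exp (- t)) / hypergeom a b (a + b) (1 - exp (- t))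
       < exp (- s) * hypergeom_deriv a b (a + b) (1 - exp (- s)) / hypergeom a b (a + b) (1 - exp (- s))"
  using one_minus_mult_hypergeom_deriv_quotient_strict_antimono[of "1 - exp (- s)" "1 - exp (- t)"] assms
  by simp

lemma convex_on_ln_hypergeom: "convex_on {0<..<1} (\<lambda>x. ln (hypergeom a b (a + b) x))"
  by (rule convex_on_realI[where f' = "\<lambda>x. hypergeom_deriv a b (a + b) x / hypergeom a b (a + b) x"])
     (use a_pos b_pos in \<open>auto simp: le_less intro: ln_hypergeom_has_real_derivative
        hypergeom_deriv_quotient_strict_mono\<close>)

lemma concave_on_ln_hypergeom_exp: "concave_on {0<..} (\<lambda>t. ln (hypergeom a b (a + b) (1 - exp (- t))))"
  unfolding concave_on_def
  by (rule convex_on_realI[where f' = "\<lambda>t. - (exp (- t) * hypergeom_deriv a b (a + b) (1 - exp (- t))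
        / hypergeom a b (a + b) (1 - exp (- t)))"])
     (use a_pos b_pos in \<open>auto simp: le_less intro: DERIV_minus[OF ln_hypergeom_exp_has_real_derivative]
        ln_hypergeom_exp_deriv_strict_antimono\<close>)

lemma convex_on_hypergeom_exp: "convex_on {0<..} (\<lambda>t. hypergeom a b (a + b) (1 - exp (- t)))"
  by (rule convex_on_realI[where f' = "\<lambda>t. exp (- t) * hypergeom_deriv a b (a + b) (1 - exp (- t))"])
     (use a_pos b_pos in \<open>auto simp: le_less intro: hypergeom_exp_has_real_derivative
        hypergeom_exp_deriv_strict_mono\<close>)

lemma hypergeom_midpoint_less_geometric_mean:
  assumes "x \<in> {0<..<1}" "y \<in> {0<..<1}" "x \<noteq> y"
  shows "hypergeom a b (a + b) ((x + y) / 2)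
       < sqrt (hypergeom a b (a + b) x * hypergeom a b (a + b) y)"
proof -
  let ?F = "hypergeom a b (a + b)"
  have pos: "0 < ?F x" "0 < ?F y" "0 < ?F ((x + y) / 2)"
    using assms a_pos b_pos by (auto intro: hypergeom_pos)
  have "ln (?F ((x + y) / 2)) < (ln (?F x) + ln (?F y)) / 2"
    by (rule midpoint_less_of_deriv_strict_mono[where A = "{0<..<1}"
          and f' = "\<lambda>x. hypergeom_deriv a b (a + b) x / ?F x"])
       (use assms a_pos b_pos in \<open>auto intro: ln_hypergeom_has_real_derivative
          hypergeom_deriv_quotient_strict_mono\<close>)
  also have "\<dots> = ln (sqrt (?F x * ?F y))"
    using pos assms by (simp add: ln_sqrt ln_mult)
  finally show ?thesis
    using pos assms by simp
qed

lemma geometric_mean_less_hypergeom_exp_midpoint: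
  assumes "x \<in> {0<..<1}" "y \<in> {0<..<1}" "x \<noteq> y"
  shows "sqrt (hypergeom a b (a + b) x * hypergeom a b (a + b) y)
       < hypergeom a b (a + b) (1 - sqrt ((1 - x) * (1 - y)))"
proof -
  let ?F = "hypergeom a b (a + b)"
  define s t where "s = - ln (1 - x)" and "t = - ln (1 - y)"
  have st: "0 < s" "0 < t" "s \<noteq> t" "1 - exp (- s) = x" "1 - exp (- t) = y"
    using assms by (auto simp: s_def t_def)
  have mid: "1 - exp (- ((s + t) / 2)) = 1 - sqrt ((1 - x) * (1 - y))"
    using assms exp_neg_midpoint_neg_ln[of x y] by (simp add: s_def t_def)
  have "- ln (?F (1 - exp (- ((s + t) / 2)))) < (- ln (?F (1 - exp (- s))) + - ln (?F (1 - exp (- t)))) / 2"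
    by (rule midpoint_less_of_deriv_strict_mono[where A = "{0<..}"
          and f' = "\<lambda>t. - (exp (- t) * hypergeom_deriv a b (a + b) (1 - exp (- t)) / ?F (1 - exp (- t)))"])
       (use st a_pos b_pos in \<open>auto intro: DERIV_minus[OF ln_hypergeom_exp_has_real_derivative]
          ln_hypergeom_exp_deriv_strict_antimono\<close>)
  moreover have "(1 - x) * (1 - y) \<le> 1"
    using assms by (intro mult_le_one) auto
  then have "0 < ?F x" "0 < ?F y" "0 < ?F (1 - sqrt ((1 - x) * (1 - y)))"
    using assms a_pos b_pos by (auto intro!: hypergeom_pos)
  ultimately have "ln (sqrt (?F x * ?F y)) < ln (?F (1 - sqrt ((1 - x) * (1 - y))))"
    unfolding st(4,5) mid by (simp add: ln_sqrt ln_mult)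
  then show ?thesis
    using \<open>0 < ?F x\<close> \<open>0 < ?F y\<close> \<open>0 < ?F (1 - sqrt ((1 - x) * (1 - y)))\<close> by simp
qed

lemma hypergeom_exp_midpoint_less_mean:
  assumes "x \<in> {0<..<1}" "y \<in> {0<..<1}" "x \<noteq> y"
  shows "hypergeom a b (a + b) (1 - sqrt ((1 - x) * (1 - y)))
       < (hypergeom a b (a + b) x + hypergeom a b (a + b) y) / 2"
proof -
  let ?F = "hypergeom a b (a + b)"
  define s t where "s = - ln (1 - x)" and "t = - ln (1 - y)"
  have st: "0 < s" "0 < t" "s \<noteq> t" "1 - exp (- s) = x" "1 - exp (- t) = y"
    using assms by (auto simp: s_def t_def)
  have mid: "1 - exp (- ((s + t) / 2)) = 1 - sqrt ((1 - x) * (1 - y))"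
    using assms exp_neg_midpoint_neg_ln[of x y] by (simp add: s_def t_def)
  have "?F (1 - exp (- ((s + t) / 2))) < (?F (1 - exp (- s)) + ?F (1 - exp (- t))) / 2"
    by (rule midpoint_less_of_deriv_strict_mono[where A = "{0<..}"
          and f' = "\<lambda>t. exp (- t) * hypergeom_deriv a b (a + b) (1 - exp (- t))"])
       (use st a_pos b_pos in \<open>auto intro: hypergeom_exp_has_real_derivative
          hypergeom_exp_deriv_strict_mono\<close>)
  then show ?thesis
    unfolding st(4,5) mid .
qed

end

theorem theorem3p2:
  fixes a b c :: real
  assumes "a > 0" and "b > 0" and "c = a + b"
  defines "F \<equiv> hypergeom a b c"
  shows "convex_on {0<..<1} (\<lambda>x. ln (F x))
    \<and> concave_on {0<..} (\<lambda>t. ln (F (1 - exp (- t))))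
    \<and> convex_on {0<..} (\<lambda>t. F (1 - exp (- t)))
    \<and> (\<forall>x\<in>{0<..<1}. \<forall>y\<in>{0<..<1}.
           F ((x + y) / 2) \<le> sqrt (F x * F y)
         \<and> sqrt (F x * F y) \<le> F (1 - sqrt ((1 - x) * (1 - y)))
         \<and> F (1 - sqrt ((1 - x) * (1 - y))) \<le> (F x + F y) / 2)
    \<and> (\<forall>x\<in>{0<..<1}. \<forall>y\<in>{0<..<1}.
           (F ((x + y) / 2) = sqrt (F x * F y) \<longleftrightarrow> x = y)
         \<and> (sqrt (F x * F y) = F (1 - sqrt ((1 - x) * (1 - y))) \<longleftrightarrow> x = y)
         \<and> (F (1 - sqrt ((1 - x) * (1 - y))) = (F x + F y) / 2 \<longleftrightarrow> x = y))"
proof -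
  have F: "F = hypergeom a b (a + b)"
    unfolding F_def \<open>c = a + b\<close> ..
  have "F ((x + y) / 2) \<le> sqrt (F x * F y) \<and> sqrt (F x * F y) \<le> F (1 - sqrt ((1 - x) * (1 - y)))
      \<and> F (1 - sqrt ((1 - x) * (1 - y))) \<le> (F x + F y) / 2
      \<and> (F ((x + y) / 2) = sqrt (F x * F y) \<longleftrightarrow> x = y)
      \<and> (sqrt (F x * F y) = F (1 - sqrt ((1 - x) * (1 - y))) \<longleftrightarrow> x = y)
      \<and> (F (1 - sqrt ((1 - x) * (1 - y))) = (F x + F y) / 2 \<longleftrightarrow> x = y)"
    if "x \<in> {0<..<1}" "y \<in> {0<..<1}" for x y
  proof (cases "x = y")
    case True
    then show ?thesis
      using hypergeom_pos[of a b "a + b" x] that assms(1,2) unfolding F by simp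
  next
    case False
    then show ?thesis
      using hypergeom_midpoint_less_geometric_mean[OF assms(1,2) that False]
        geometric_mean_less_hypergeom_exp_midpoint[OF assms(1,2) that False]
        hypergeom_exp_midpoint_less_mean[OF assms(1,2) that False]
      unfolding F by auto
  qed
  then show ?thesis
    using convex_on_ln_hypergeom concave_on_ln_hypergeom_exp convex_on_hypergeom_exp assms(1,2)
    unfolding F by blast
qed

end
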